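(* Let $\tau:\mathbb R^2\to[0,1]$ be almost everywhere continuous, equal to $1$ on $B(0,a)$ and equal to $0$ outside $B(0,b)$ for some $0<a<b$. There exist $c_\tau\in\mathbb R$ depending only on $\tau$, and real numbers $(C_L)_{L\ge1}$ not depending on $\tau$ with $C_L\to0$ as $L\to\infty$, such that for all $L\ge1$ $$c_{\epsilon,L}-\frac1{2\pi}\log\frac1\epsilon-c_\tau\xrightarrow{\epsilon\downarrow0}C_L .$$
   Context: For $\epsilon,L>0$, $c_{\epsilon,L}=\frac1{4L^2}\sum_{k\in\mathbb Z^2}\frac{\tau(\frac\epsilon Lk)^2}{1+\frac{\pi^2}{L^2}|k|^2}$. *)

theory Defs
  imports "HOL-Analysis.Analysis"
begin

definition c_epsL :: "(real \<times> real \<Rightarrow> real) \<Rightarrow> real \<Rightarrow> real \<Rightarrow> real" where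
  "c_epsL \<tau> \<epsilon> L =
     1 / (4 * L\<^sup>2) *
     (\<Sum>\<^sub>\<infinity>k\<in>(UNIV :: (int \<times> int) set).
        (\<tau> ((\<epsilon> / L) * real_of_int (fst k), (\<epsilon> / L) * real_of_int (snd k)))\<^sup>2
        / (1 + pi\<^sup>2 / L\<^sup>2 * (real_of_int (fst k) ^ 2 + real_of_int (snd k) ^ 2)))"

end

theory Submission
  imports Defs
begin

(*
  Write eps = 1/t and w(x) = 1/(1 + pi^2 |x|^2), so that c_{eps,L} = (4L^2)^-1 sum_k tau(k/(tL))^2 w(k/L).
  Since tau = 1 on a square [-s,s]^2, split tau^2 = 1_{[-s,s]^2} + u.

  The first lattice sum is L^2 times the integral of w o q_L over {q_L in [-st,st]^2}, where q_L
  rounds down to the grid L^-1 Z^2. As w - 1/(pi^2 |x|^2) is integrable at infinity and the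
  integral of |x|^-2 over [-R,R]^2 - [-1,1]^2 is 2 pi log R, the integral of w over [-R,R]^2 is
  (2/pi) log R + g + o(1). Rounding adds C_L = (1/4) integral (w o q_L - w) in the limit, and
  C_L -> 0 by dominated convergence.

  The second sum, read on the finer grid (tL)^-1 Z^2, is L^2 times the integral of
  u o q_{tL} / (t^-2 + pi^2 |q_{tL}|^2). It converges to the integral of u / (pi^2 |x|^2), which does
  not depend on L, by dominated convergence: u vanishes near 0 and is continuous almost everywhere.
*)

lemma measurable_fst_real [measurable]: "(fst :: real \<times> real \<Rightarrow> real) \<in> borel_measurable borel"
  by (simp add: borel_prod[symmetric])

lemma measurable_snd_real [measurable]: "(snd :: real \<times> real \<Rightarrow> real) \<in> borel_measurable borel"
  by (simp add: borel_prod[symmetric])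

lemma norm_sq_prod: "(norm w)\<^sup>2 = (fst w)\<^sup>2 + (snd w)\<^sup>2" for w :: "real \<times> real"
  by (cases w) (simp add: norm_Pair)

lemma max_abs_le_norm: "max \<bar>fst w\<bar> \<bar>snd w\<bar> \<le> norm w" for w :: "real \<times> real"
  using norm_fst_le[of "fst w" "snd w"] norm_snd_le[of "snd w" "fst w"] by simp

lemma pi_sq_ge_9: "9 \<le> pi\<^sup>2"
  using pi_gt3 power_mono[of 3 pi 2] by simp

lemma cube_one_plus_le: "1 \<le> m \<Longrightarrow> (1 + m) ^ 3 \<le> 8 * m ^ 3" for m :: real
  using power_mono[of "1 + m" "2 * m" 3] by (simp add: power_mult_distrib)

definition square :: "real \<Rightarrow> (real \<times> real) set" where
  "square R = {w. \<bar>fst w\<bar> \<le> R \<and> \<bar>snd w\<bar> \<le> R}"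

definition grid :: "real \<Rightarrow> real \<times> real \<Rightarrow> real \<times> real" where
  "grid M w = (of_int \<lfloor>M * fst w\<rfloor> / M, of_int \<lfloor>M * snd w\<rfloor> / M)"

lemma square_sets [measurable]: "square R \<in> sets lborel"
  unfolding square_def by measurable

lemma square_subset_cball: "square R \<subseteq> cball 0 (2 * R)"
proof
  fix w assume "w \<in> square R"
  then have "norm w \<le> 2 * R"
    using norm_Pair_le[of "fst w" "snd w"] unfolding square_def by simp
  then show "w \<in> cball 0 (2 * R)" by simp
qed

lemma ball_subset_square: "ball 0 R \<subseteq> square R"
proof
  fix w :: "real \<times> real" assume "w \<in> ball 0 R"
  then have "max \<bar>fst w\<bar> \<bar>snd w\<bar> < R"
    using max_abs_le_norm[of w] by simp
  then show "w \<in> square R" unfolding square_def by simp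
qed

lemma integrable_square_indicator: "integrable lborel (indicator (square R) :: real \<times> real \<Rightarrow> real)"
  using square_sets[of R] emeasure_bounded_finite[OF bounded_subset[OF bounded_cball square_subset_cball]]
  by (intro integrable_real_indicator) auto

lemma integrable_bounded_on_square:
  fixes f :: "real \<times> real \<Rightarrow> real"
  assumes "f \<in> borel_measurable lborel" "\<And>w. \<bar>f w\<bar> \<le> c * indicator (square R) w"
  shows "integrable lborel f"
proof (rule Bochner_Integration.integrable_bound)
  show "integrable lborel (\<lambda>w. c * indicator (square R) w)"
    using integrable_square_indicator by simp
  show "AE w in lborel. norm (f w) \<le> norm (c * indicator (square R) w)"
    using assms(2) by (intro AE_I2) (simp only: real_norm_def, rule order_trans[OF _ abs_ge_self])
qed fact

lemma grid_measurable [measurable]: "grid M \<in> borel_measurable borel"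
  unfolding grid_def by measurable

lemma floor_mult_div_bounds:
  fixes M x :: real
  assumes "M > 0"
  shows "x - 1 / M < of_int \<lfloor>M * x\<rfloor> / M" "of_int \<lfloor>M * x\<rfloor> / M \<le> x"
proof -
  have "(M * x - 1) / M < of_int \<lfloor>M * x\<rfloor> / M"
    by (rule divide_strict_right_mono) (linarith, rule assms)
  then show "x - 1 / M < of_int \<lfloor>M * x\<rfloor> / M"
    using assms by (simp add: diff_divide_distrib)
  have "of_int \<lfloor>M * x\<rfloor> / M \<le> (M * x) / M"
    by (rule divide_right_mono) (linarith, use assms in simp)
  then show "of_int \<lfloor>M * x\<rfloor> / M \<le> x"
    using assms by simp
qed

lemma grid_close:
  assumes "M \<ge> 1"
  shows "\<bar>fst (grid M w) - fst w\<bar> \<le> 1" "\<bar>snd (grid M w) - snd w\<bar> \<le> 1"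
proof -
  have "1 / M \<le> 1" using assms by simp
  then show "\<bar>fst (grid M w) - fst w\<bar> \<le> 1" "\<bar>snd (grid M w) - snd w\<bar> \<le> 1"
    using floor_mult_div_bounds[of M "fst w"] floor_mult_div_bounds[of M "snd w"] assms
    unfolding grid_def fst_conv snd_conv by linarith+
qed

lemma grid_mem_square:
  assumes "M \<ge> 1"
  shows "w \<in> square (R - 1) \<Longrightarrow> grid M w \<in> square R"
    and "grid M w \<in> square R \<Longrightarrow> w \<in> square (R + 1)"
  using grid_close[OF assms, of w] unfolding square_def by auto

lemma grid_tendsto: "((\<lambda>M. grid M w) \<longlongrightarrow> w) at_top"
proof -
  have "((\<lambda>M. of_int \<lfloor>M * x\<rfloor> / M) \<longlongrightarrow> x) at_top" for x :: real
  proof (rule tendsto_sandwich[of "\<lambda>M. x - 1 / M" _ _ "\<lambda>M. x"])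
    show "\<forall>\<^sub>F M in at_top. x - 1 / M \<le> of_int \<lfloor>M * x\<rfloor> / M"
      using eventually_gt_at_top[of 0]
      by eventually_elim (use floor_mult_div_bounds(1) in \<open>auto intro: less_imp_le\<close>)
    show "\<forall>\<^sub>F M in at_top. of_int \<lfloor>M * x\<rfloor> / M \<le> x"
      using eventually_gt_at_top[of 0] by eventually_elim (rule floor_mult_div_bounds(2))
    show "((\<lambda>M. x - 1 / M) \<longlongrightarrow> x) at_top" by real_asymp
  qed simp
  from tendsto_Pair[OF this[of "fst w"] this[of "snd w"]] show ?thesis
    unfolding grid_def by simp
qed

definition decay :: "real \<Rightarrow> real" where
  "decay t = 1 / ((1 + \<bar>t\<bar>) * sqrt (1 + \<bar>t\<bar>))"

(* The factor 30 makes it dominate both the rounding error of the weight and the weight gap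
   outside the unit square. *)
definition majorant :: "real \<times> real \<Rightarrow> real" where
  "majorant w = 30 * decay (fst w) * decay (snd w)"

lemma decay_pos: "0 < decay t"
  unfolding decay_def by (simp add: add_pos_nonneg)

lemma decay_measurable [measurable]: "decay \<in> borel_measurable borel"
  unfolding decay_def by measurable

lemma decay_antimono: "\<bar>t\<bar> \<le> m \<Longrightarrow> 1 / ((1 + m) * sqrt (1 + m)) \<le> decay t"
  unfolding decay_def by (intro divide_left_mono mult_mono mult_pos_pos) (auto simp: add_pos_nonneg)

lemma nn_integral_decay_halfline: "(\<integral>\<^sup>+x. ennreal (decay x) * indicator {0..} x \<partial>lborel) = 2"
proof -
  have "(\<integral>\<^sup>+x. ennreal (decay x) * indicator {0..} x \<partial>lborel) = 0 - (-2 / sqrt (1 + 0))"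
  proof (rule nn_integral_FTC_atLeast)
    show "DERIV (\<lambda>t. -2 / sqrt (1 + t)) x :> decay x" if "0 \<le> x" for x
    proof -
      have "DERIV (\<lambda>t. -2 / sqrt (1 + t)) x :> inverse (sqrt (1 + x)) / (sqrt (1 + x))\<^sup>2"
        using that by (auto intro!: derivative_eq_intros)
      also have "inverse (sqrt (1 + x)) / (sqrt (1 + x))\<^sup>2 = decay x"
        using that by (simp add: decay_def field_simps)
      finally show ?thesis .
    qed
    show "((\<lambda>t. -2 / sqrt (1 + t)) \<longlongrightarrow> 0) at_top" by real_asymp
  qed (use decay_pos in \<open>auto intro: less_imp_le\<close>)
  then show ?thesis by simp
qed

lemma nn_integral_decay_le: "(\<integral>\<^sup>+x. ennreal (decay x) \<partial>lborel) \<le> 4"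
proof -
  have "(\<integral>\<^sup>+x. ennreal (decay x) \<partial>lborel) \<le>
     (\<integral>\<^sup>+x. ennreal (decay x) * indicator {0..} x + ennreal (decay (-x)) * indicator {0..} (-x) \<partial>lborel)"
    by (intro nn_integral_mono) (auto simp: decay_def indicator_def)
  also have "\<dots> = (\<integral>\<^sup>+x. ennreal (decay x) * indicator {0..} x \<partial>lborel)
      + (\<integral>\<^sup>+x. ennreal (decay (-x)) * indicator {0..} (-x) \<partial>lborel)"
    by (rule nn_integral_add) measurable
  also have "(\<integral>\<^sup>+x. ennreal (decay (-x)) * indicator {0..} (-x) \<partial>lborel)
      = (\<integral>\<^sup>+x. ennreal (decay x) * indicator {0..} x \<partial>lborel)"
    using nn_integral_real_affine[of "\<lambda>x. ennreal (decay x) * indicator {0..} x" "-1" 0] by simp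
  finally show ?thesis using nn_integral_decay_halfline by simp
qed

lemma majorant_measurable [measurable]: "majorant \<in> borel_measurable borel"
  unfolding majorant_def by measurable

lemma majorant_pos: "0 < majorant w"
  unfolding majorant_def using decay_pos by simp

lemma integrable_majorant: "integrable lborel majorant"
proof -
  have "(\<integral>\<^sup>+w. ennreal (majorant w) \<partial>(lborel::(real \<times> real) measure))
      = (\<integral>\<^sup>+w. ennreal (majorant w) \<partial>(lborel \<Otimes>\<^sub>M lborel))"
    by (simp only: lborel_prod)
  also have "\<dots> = (\<integral>\<^sup>+x. \<integral>\<^sup>+y. 30 * ennreal (decay x) * ennreal (decay y) \<partial>lborel \<partial>lborel)"
    by (subst lborel.nn_integral_fst[symmetric])
      (auto simp: majorant_def ennreal_mult decay_pos less_imp_le)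
  also have "\<dots> = 30 * (\<integral>\<^sup>+x. ennreal (decay x) \<partial>lborel) * (\<integral>\<^sup>+y. ennreal (decay y) \<partial>lborel)"
    by (simp add: nn_integral_cmult nn_integral_multc)
  also have "\<dots> \<le> 30 * 4 * 4"
    using nn_integral_decay_le by (intro mult_mono) auto
  finally have "(\<integral>\<^sup>+w. ennreal (majorant w) \<partial>(lborel::(real \<times> real) measure)) < \<infinity>"
    by (simp add: le_less_trans)
  then show ?thesis
    by (subst integrable_iff_bounded) (auto simp: majorant_pos less_imp_le)
qed

lemma majorant_lower_bound: "30 / (1 + max \<bar>fst w\<bar> \<bar>snd w\<bar>) ^ 3 \<le> majorant w"
proof -
  define m where "m = max \<bar>fst w\<bar> \<bar>snd w\<bar>"
  have "0 \<le> m" unfolding m_def by simp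
  then have "1 / (1 + m) ^ 3 = 1 / ((1 + m) * sqrt (1 + m)) * (1 / ((1 + m) * sqrt (1 + m)))"
    by (simp add: power3_eq_cube field_simps)
  also have "\<dots> \<le> decay (fst w) * decay (snd w)"
    unfolding m_def by (intro mult_mono decay_antimono) (auto simp: decay_def add_pos_nonneg)
  finally show ?thesis unfolding majorant_def m_def by simp
qed

(* The summand of c_epsL at k is tau(eps/L k)^2 * weight (k/L). *)

definition weight :: "real \<times> real \<Rightarrow> real" where
  "weight w = 1 / (1 + pi\<^sup>2 * (norm w)\<^sup>2)"

lemma weight_denom_pos: "0 < 1 + pi\<^sup>2 * (norm w)\<^sup>2"
  by (intro add_pos_nonneg) auto

lemma weight_denom_nonzero: "1 + pi\<^sup>2 * (norm w)\<^sup>2 \<noteq> 0"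
  by (metis weight_denom_pos less_irrefl)

lemma weight_measurable [measurable]: "weight \<in> borel_measurable borel"
  unfolding weight_def by measurable

lemma weight_pos: "0 < weight w"
  unfolding weight_def by (simp add: add_pos_nonneg)

lemma weight_le_1: "weight w \<le> 1"
  unfolding weight_def by (simp add: add_pos_nonneg)

lemma abs_weight_le_1: "\<bar>weight w\<bar> \<le> 1"
  using weight_pos[of w] weight_le_1[of w] by simp

lemma abs_weight_diff_le_1: "\<bar>weight q - weight w\<bar> \<le> 1"
  using weight_pos[of q] weight_pos[of w] weight_le_1[of q] weight_le_1[of w] by linarith

lemma isCont_weight: "isCont weight w"
  unfolding weight_def by (intro continuous_intros) (rule weight_denom_nonzero)

lemma weight_le_inverse_sq:
  assumes "0 < r" "r \<le> norm w"
  shows "weight w \<le> 1 / (pi\<^sup>2 * r\<^sup>2)"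
proof -
  have "pi\<^sup>2 * r\<^sup>2 \<le> 1 + pi\<^sup>2 * (norm w)\<^sup>2"
    using assms by (intro add_increasing mult_left_mono power_mono) auto
  then show ?thesis
    unfolding weight_def using assms weight_denom_pos[of w] by (intro divide_left_mono) auto
qed

lemma weight_diff: "weight q - weight w = pi\<^sup>2 * ((norm w)\<^sup>2 - (norm q)\<^sup>2) * weight q * weight w"
  using weight_denom_nonzero[of q] weight_denom_nonzero[of w]
  unfolding weight_def by (simp add: field_simps)

lemma abs_sq_diff_le: "\<bar>x - y\<bar> \<le> 1 \<Longrightarrow> \<bar>x\<^sup>2 - y\<^sup>2\<bar> \<le> 2 * \<bar>x\<bar> + 1" for x y :: real
proof -
  assume "\<bar>x - y\<bar> \<le> 1"
  have "\<bar>x\<^sup>2 - y\<^sup>2\<bar> = \<bar>x - y\<bar> * \<bar>x + y\<bar>"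
    by (simp add: power2_eq_square abs_mult[symmetric] algebra_simps)
  also have "\<dots> \<le> 1 * (2 * \<bar>x\<bar> + 1)"
    using \<open>\<bar>x - y\<bar> \<le> 1\<close> by (intro mult_mono) auto
  finally show ?thesis by simp
qed

lemma weight_diff_le_majorant:
  assumes "\<bar>fst q - fst w\<bar> \<le> 1" "\<bar>snd q - snd w\<bar> \<le> 1"
  shows "\<bar>weight q - weight w\<bar> \<le> majorant w"
proof -
  define m where "m = max \<bar>fst w\<bar> \<bar>snd w\<bar>"
  have "0 \<le> m" unfolding m_def by simp
  have "\<bar>weight q - weight w\<bar> \<le> 30 / (1 + m) ^ 3"
  proof (cases "m < 2")
    case True
    have "(1 + m) ^ 3 \<le> 3 ^ 3" using True \<open>0 \<le> m\<close> by (intro power_mono) auto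
    then have "1 \<le> 30 / (1 + m) ^ 3" using \<open>0 \<le> m\<close> by (simp add: field_simps)
    then show ?thesis using abs_weight_diff_le_1[of q w] by linarith
  next
    case False
    have "\<bar>(norm w)\<^sup>2 - (norm q)\<^sup>2\<bar> \<le> (2 * \<bar>fst w\<bar> + 1) + (2 * \<bar>snd w\<bar> + 1)"
      using abs_sq_diff_le[of "fst w" "fst q"] abs_sq_diff_le[of "snd w" "snd q"] assms
        abs_triangle_ineq[of "(fst w)\<^sup>2 - (fst q)\<^sup>2" "(snd w)\<^sup>2 - (snd q)\<^sup>2"]
      unfolding norm_sq_prod by (simp add: abs_minus_commute algebra_simps)
    also have "\<dots> \<le> 5 * m"
      using False unfolding m_def by linarith
    finally have "\<bar>(norm w)\<^sup>2 - (norm q)\<^sup>2\<bar> \<le> 5 * m" .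
    moreover have "weight q \<le> 1 / (pi\<^sup>2 * (m / 2)\<^sup>2)"
    proof (rule weight_le_inverse_sq)
      have "m - 1 \<le> max \<bar>fst q\<bar> \<bar>snd q\<bar>" using assms unfolding m_def by auto
      then show "m / 2 \<le> norm q" using False max_abs_le_norm[of q] by linarith
    qed (use False in simp)
    moreover have "weight w \<le> 1 / (pi\<^sup>2 * m\<^sup>2)"
      using False max_abs_le_norm[of w] unfolding m_def by (intro weight_le_inverse_sq) auto
    ultimately have "\<bar>weight q - weight w\<bar> \<le> pi\<^sup>2 * (5 * m) * (1 / (pi\<^sup>2 * (m / 2)\<^sup>2)) * (1 / (pi\<^sup>2 * m\<^sup>2))"
      unfolding weight_diff abs_mult using weight_pos[of q] weight_pos[of w]
      by (intro mult_mono) auto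
    also have "\<dots> = 20 / (pi\<^sup>2 * m ^ 3)"
      using False by (simp add: field_simps power2_eq_square power3_eq_cube)
    also have "\<dots> \<le> 30 / (1 + m) ^ 3"
    proof -
      have "20 * (1 + m) ^ 3 \<le> 30 * (9 * m ^ 3)"
        using cube_one_plus_le[of m] False zero_le_power[OF \<open>0 \<le> m\<close>, of 3] by linarith
      also have "\<dots> \<le> 30 * (pi\<^sup>2 * m ^ 3)"
        using pi_sq_ge_9 \<open>0 \<le> m\<close> by (intro mult_left_mono mult_right_mono) auto
      finally show ?thesis using False by (simp add: field_simps)
    qed
    finally show ?thesis .
  qed
  then show ?thesis using majorant_lower_bound[of w] unfolding m_def by linarith
qed

definition weight_gap :: "real \<times> real \<Rightarrow> real" where
  "weight_gap w = 1 / (pi\<^sup>2 * (norm w)\<^sup>2) - weight w"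

lemma weight_gap_measurable [measurable]: "weight_gap \<in> borel_measurable borel"
  unfolding weight_gap_def by measurable

lemma weight_gap_bounds:
  assumes "w \<notin> square 1"
  shows "0 \<le> weight_gap w" "weight_gap w \<le> majorant w"
proof -
  define m where "m = max \<bar>fst w\<bar> \<bar>snd w\<bar>"
  have "1 < m" using assms unfolding square_def m_def by auto
  have "m \<le> norm w" using max_abs_le_norm unfolding m_def by simp
  then have "w \<noteq> 0" using \<open>1 < m\<close> by auto
  then have gap: "weight_gap w = weight w / (pi\<^sup>2 * (norm w)\<^sup>2)"
    using weight_denom_nonzero[of w] unfolding weight_gap_def weight_def by (simp add: field_simps)
  then show "0 \<le> weight_gap w" using weight_pos[of w] by simp
  have "weight_gap w \<le> 1 / (pi\<^sup>2 * m\<^sup>2) / (pi\<^sup>2 * m\<^sup>2)"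
    unfolding gap using \<open>1 < m\<close> \<open>m \<le> norm w\<close> weight_le_inverse_sq[of m w]
    by (intro frac_le mult_left_mono power_mono) auto
  also have "\<dots> \<le> 30 / (1 + m) ^ 3"
  proof -
    have "(1 + m) ^ 3 \<le> 8 * m ^ 3 * m"
    proof -
      have "8 * m ^ 3 * 1 \<le> 8 * m ^ 3 * m" using \<open>1 < m\<close> by (intro mult_left_mono) auto
      then show ?thesis using cube_one_plus_le[of m] \<open>1 < m\<close> by linarith
    qed
    also have "\<dots> \<le> 30 * (9 * m\<^sup>2) * (9 * m\<^sup>2)"
      using \<open>1 < m\<close> by (simp add: power2_eq_square power3_eq_cube)
    also have "\<dots> \<le> 30 * (pi\<^sup>2 * m\<^sup>2) * (pi\<^sup>2 * m\<^sup>2)"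
      using pi_sq_ge_9 by (intro mult_mono) auto
    finally show ?thesis using \<open>1 < m\<close> by (simp add: field_simps)
  qed
  finally show "weight_gap w \<le> majorant w"
    using majorant_lower_bound[of w] unfolding m_def by linarith
qed

subsection \<open>Logarithmic growth of the weight over squares\<close>

lemma integral_arctan_interval:
  fixes c :: real
  assumes "c > 0"
  shows "(LBINT y. indicator {-c..c} y * (1 / (c\<^sup>2 + y\<^sup>2))) = pi / (2 * c)"
proof -
  have "(LBINT y. indicator {-c..c} y *\<^sub>R (1 / (c\<^sup>2 + y\<^sup>2))) = arctan (c / c) / c - arctan (-c / c) / c"
  proof (rule integral_FTC_atLeastAtMost)
    show "((\<lambda>y. arctan (y / c) / c) has_vector_derivative 1 / (c\<^sup>2 + x\<^sup>2)) (at x within {-c..c})" for x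
    proof -
      have "((\<lambda>y. arctan (y / c) / c) has_real_derivative inverse (1 + (x / c)\<^sup>2) * (1 / c) / c) (at x)"
        using assms by (auto intro!: derivative_eq_intros)
      moreover have "0 < c * (c * c) + c * (x * x)"
        using assms by (intro add_pos_nonneg) auto
      then have "inverse (1 + (x / c)\<^sup>2) * (1 / c) / c = 1 / (c\<^sup>2 + x\<^sup>2)"
        using assms by (simp add: field_simps power2_eq_square)
      ultimately show ?thesis
        by (simp add: has_real_derivative_iff_has_vector_derivative[symmetric] has_field_derivative_at_within)
    qed
    show "continuous_on {-c..c} (\<lambda>y. 1 / (c\<^sup>2 + y\<^sup>2))"
      using assms by (intro continuous_intros) (auto simp: add_pos_nonneg)
  qed (use assms in simp)
  also have "\<dots> = pi / (2 * c)" using assms by (simp add: arctan_minus)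
  finally show ?thesis by simp
qed

lemma integral_inverse_abs_shell:
  fixes R :: real
  assumes "R \<ge> 1"
  shows "(LBINT x. indicator {x. 1 < \<bar>x\<bar> \<and> \<bar>x\<bar> \<le> R} x * (1 / \<bar>x\<bar>)) = 2 * ln R"
proof -
  let ?f = "\<lambda>x::real. indicator {1<..R} x * (1 / x)"
  have FTC: "(LBINT x. indicator {1..R} x *\<^sub>R (1 / x)) = ln R - ln 1"
  proof (rule integral_FTC_atLeastAtMost)
    show "(ln has_vector_derivative 1 / x) (at x within {1..R})" if "1 \<le> x" for x
      using that DERIV_ln[of x]
      by (simp add: has_real_derivative_iff_has_vector_derivative[symmetric]
          has_field_derivative_at_within inverse_eq_divide)
  qed (use assms in \<open>auto intro!: continuous_intros\<close>)
  have closed: "AE x in lborel. indicator {1..R} x * (1 / x) = ?f x"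
    using AE_lborel_singleton[of 1] by eventually_elim (auto simp: indicator_def)
  have "continuous_on {1..R} (\<lambda>x::real. 1 / x)"
    by (intro continuous_intros) auto
  then have "integrable lborel (\<lambda>x::real. indicator {1..R} x * (1 / x))"
    using borel_integrable_atLeastAtMost'[of 1 R "\<lambda>x. 1 / x"] unfolding set_integrable_def by simp
  then have int: "integrable lborel ?f"
    by (rule integrable_cong_AE_imp[OF _ _ closed]) measurable
  have pos: "(LBINT x. ?f x) = ln R"
    using FTC integral_cong_AE[OF _ _ closed] by simp
  have neg: "(LBINT x. ?f (- x)) = ln R"
    using lborel_integral_real_affine[of "-1" ?f 0] pos by simp
  have "(LBINT x. indicator {x. 1 < \<bar>x\<bar> \<and> \<bar>x\<bar> \<le> R} x * (1 / \<bar>x\<bar>)) = (LBINT x. ?f x + ?f (- x))"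
    by (intro Bochner_Integration.integral_cong) (auto simp: indicator_def)
  also have "\<dots> = 2 * ln R"
    using int lborel_integrable_real_affine[OF int, of "-1" 0] pos neg by simp
  finally show ?thesis .
qed

lemma integrable_inverse_sq_on_shell:
  assumes "A \<in> sets lborel" "A \<subseteq> square R - square 1"
  shows "integrable lborel (\<lambda>w. indicator A w / (norm w)\<^sup>2)"
proof (rule integrable_bounded_on_square[where c = 1 and R = R])
  show "\<bar>indicator A w / (norm w)\<^sup>2\<bar> \<le> 1 * indicator (square R) w" for w
  proof (cases "w \<in> A")
    case True
    then have "1 < max \<bar>fst w\<bar> \<bar>snd w\<bar>" "w \<in> square R"
      using assms(2) unfolding square_def by auto
    then have "1 \<le> norm w"
      using max_abs_le_norm[of w] by linarith
    then have "1 / (norm w)\<^sup>2 \<le> 1"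
      using one_le_power[of "norm w" 2] by (auto simp: divide_le_eq_1)
    then show ?thesis using True \<open>w \<in> square R\<close> by simp
  qed simp
qed (use assms(1) in measurable)

lemma integral_inverse_sq_sector_fst:
  assumes "R \<ge> 1"
  shows "(\<integral>w. indicator {w. \<bar>snd w\<bar> \<le> \<bar>fst w\<bar> \<and> 1 < \<bar>fst w\<bar> \<and> \<bar>fst w\<bar> \<le> R} w / (norm w)\<^sup>2 \<partial>lborel)
    = pi * ln R"
proof -
  let ?S = "{w. \<bar>snd w\<bar> \<le> \<bar>fst w\<bar> \<and> 1 < \<bar>fst w\<bar> \<and> \<bar>fst w\<bar> \<le> R}"
  let ?f = "\<lambda>w. indicator ?S w / (norm w)\<^sup>2"
  have "integrable lborel ?f"
    by (rule integrable_inverse_sq_on_shell[where R = R]) (measurable, auto simp: square_def)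
  then have "integrable (lborel \<Otimes>\<^sub>M lborel) ?f"
    by (simp only: lborel_prod)
  then have "(\<integral>w. ?f w \<partial>lborel) = (LBINT x. LBINT y. ?f (x, y))"
    unfolding lborel_prod[symmetric] by (rule lborel_pair.integral_fst'[symmetric])
  also have "\<dots> = (LBINT x. pi / 2 * (indicator {x. 1 < \<bar>x\<bar> \<and> \<bar>x\<bar> \<le> R} x * (1 / \<bar>x\<bar>)))"
  proof (intro Bochner_Integration.integral_cong refl)
    fix x :: real
    show "(LBINT y. ?f (x, y)) = pi / 2 * (indicator {x. 1 < \<bar>x\<bar> \<and> \<bar>x\<bar> \<le> R} x * (1 / \<bar>x\<bar>))"
    proof (cases "1 < \<bar>x\<bar> \<and> \<bar>x\<bar> \<le> R")
      case True
      then have "(LBINT y. ?f (x, y)) = (LBINT y. indicator {-\<bar>x\<bar>..\<bar>x\<bar>} y * (1 / (\<bar>x\<bar>\<^sup>2 + y\<^sup>2)))"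
        by (intro Bochner_Integration.integral_cong) (auto simp: indicator_def norm_sq_prod)
      also have "\<dots> = pi / (2 * \<bar>x\<bar>)" using True by (intro integral_arctan_interval) auto
      finally show ?thesis using True by simp
    qed auto
  qed
  also have "\<dots> = pi * ln R"
    unfolding integral_mult_right_zero integral_inverse_abs_shell[OF assms] by simp
  finally show ?thesis .
qed

lemma integral_inverse_sq_sector_snd:
  assumes "R \<ge> 1"
  shows "(\<integral>w. indicator {w. \<bar>fst w\<bar> < \<bar>snd w\<bar> \<and> 1 < \<bar>snd w\<bar> \<and> \<bar>snd w\<bar> \<le> R} w / (norm w)\<^sup>2 \<partial>lborel)
    = pi * ln R"
proof -
  let ?S = "{w. \<bar>fst w\<bar> < \<bar>snd w\<bar> \<and> 1 < \<bar>snd w\<bar> \<and> \<bar>snd w\<bar> \<le> R}"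
  let ?f = "\<lambda>x y. indicator ?S (x, y) / (norm (x, y))\<^sup>2"
  have "integrable lborel (\<lambda>w. indicator ?S w / (norm w)\<^sup>2)"
    by (rule integrable_inverse_sq_on_shell[where R = R]) (measurable, auto simp: square_def)
  then have "integrable (lborel \<Otimes>\<^sub>M lborel) (case_prod ?f)"
    by (simp only: lborel_prod case_prod_beta' prod.collapse)
  then have "(\<integral>w. case_prod ?f w \<partial>lborel) = (LBINT y. LBINT x. ?f x y)"
    unfolding lborel_prod[symmetric] by (rule lborel_pair.integral_snd[symmetric])
  also have "\<dots> = (LBINT y. pi / 2 * (indicator {x. 1 < \<bar>x\<bar> \<and> \<bar>x\<bar> \<le> R} y * (1 / \<bar>y\<bar>)))"
  proof (intro Bochner_Integration.integral_cong refl)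
    fix y :: real
    show "(LBINT x. ?f x y) = pi / 2 * (indicator {x. 1 < \<bar>x\<bar> \<and> \<bar>x\<bar> \<le> R} y * (1 / \<bar>y\<bar>))"
    proof (cases "1 < \<bar>y\<bar> \<and> \<bar>y\<bar> \<le> R")
      case True
      have "(LBINT x. ?f x y) = (LBINT x. indicator {-\<bar>y\<bar>..\<bar>y\<bar>} x * (1 / (\<bar>y\<bar>\<^sup>2 + x\<^sup>2)))"
      proof (rule integral_cong_AE)
        show "AE x in lborel. ?f x y = indicator {-\<bar>y\<bar>..\<bar>y\<bar>} x * (1 / (\<bar>y\<bar>\<^sup>2 + x\<^sup>2))"
          using AE_lborel_singleton[of "\<bar>y\<bar>"] AE_lborel_singleton[of "-\<bar>y\<bar>"]
          by eventually_elim (use True in \<open>auto simp: indicator_def norm_sq_prod add.commute\<close>)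
      qed measurable
      also have "\<dots> = pi / (2 * \<bar>y\<bar>)" using True by (intro integral_arctan_interval) auto
      finally show ?thesis using True by simp
    qed auto
  qed
  also have "\<dots> = pi * ln R"
    unfolding integral_mult_right_zero integral_inverse_abs_shell[OF assms] by simp
  finally show ?thesis by (simp add: case_prod_beta')
qed

lemma integral_inverse_sq_shell:
  assumes "R \<ge> 1"
  shows "(\<integral>w. indicator (square R - square 1) w / (norm w)\<^sup>2 \<partial>lborel) = 2 * pi * ln R"
proof -
  let ?A = "{w. \<bar>snd w\<bar> \<le> \<bar>fst w\<bar> \<and> 1 < \<bar>fst w\<bar> \<and> \<bar>fst w\<bar> \<le> R}"
  let ?B = "{w. \<bar>fst w\<bar> < \<bar>snd w\<bar> \<and> 1 < \<bar>snd w\<bar> \<and> \<bar>snd w\<bar> \<le> R}"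
  have split: "indicator (square R - square 1) w / (norm w)\<^sup>2
      = indicator ?A w / (norm w)\<^sup>2 + indicator ?B w / (norm w)\<^sup>2" for w
    by (auto simp: indicator_def square_def add_divide_distrib)
  have "integrable lborel (\<lambda>w. indicator ?A w / (norm w)\<^sup>2)"
    by (rule integrable_inverse_sq_on_shell[where R = R]) (measurable, force simp: square_def)
  moreover have "integrable lborel (\<lambda>w. indicator ?B w / (norm w)\<^sup>2)"
    by (rule integrable_inverse_sq_on_shell[where R = R]) (measurable, force simp: square_def)
  ultimately show ?thesis
    unfolding split using integral_inverse_sq_sector_fst[OF assms] integral_inverse_sq_sector_snd[OF assms]
    by simp
qed

definition weight_log_const :: real where
  "weight_log_const = (\<integral>w. indicator (square 1) w * weight w \<partial>lborel)
     - (\<integral>w. indicator (- square 1) w * weight_gap w \<partial>lborel)"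

lemma integrable_square_weight: "integrable lborel (\<lambda>w. indicator (square R) w * weight w)"
  by (rule integrable_bounded_on_square[where c = 1 and R = R])
    (auto simp: indicator_def weight_pos less_imp_le weight_le_1)

lemma integrable_weight_gap_outside:
  assumes "A \<in> sets lborel" "A \<subseteq> - square 1"
  shows "integrable lborel (\<lambda>w. indicator A w * weight_gap w)"
proof (rule Bochner_Integration.integrable_bound[OF integrable_majorant])
  show "AE w in lborel. norm (indicator A w * weight_gap w) \<le> norm (majorant w)"
    using assms(2) weight_gap_bounds majorant_pos
    by (intro AE_I2) (auto simp: indicator_def less_imp_le)
qed (use assms(1) in measurable)

lemma integral_square_weight_eq:
  assumes "R \<ge> 1"
  shows "(\<integral>w. indicator (square R) w * weight w \<partial>lborel) =
    (\<integral>w. indicator (square 1) w * weight w \<partial>lborel) + 2 / pi * ln R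
      - (\<integral>w. indicator (square R - square 1) w * weight_gap w \<partial>lborel)"
proof -
  have "square 1 \<subseteq> square R" using assms unfolding square_def by auto
  then have split: "indicator (square R) w * weight w = indicator (square 1) w * weight w
      + 1 / pi\<^sup>2 * (indicator (square R - square 1) w / (norm w)\<^sup>2)
      - indicator (square R - square 1) w * weight_gap w" for w
    by (auto simp: indicator_def weight_gap_def)
  have "integrable lborel (\<lambda>w. indicator (square R - square 1) w / (norm w)\<^sup>2)"
    by (rule integrable_inverse_sq_on_shell) (measurable, auto)
  moreover have "integrable lborel (\<lambda>w. indicator (square R - square 1) w * weight_gap w)"
    by (rule integrable_weight_gap_outside) (measurable, auto)
  ultimately have "(\<integral>w. indicator (square R) w * weight w \<partial>lborel) =
      (\<integral>w. indicator (square 1) w * weight w \<partial>lborel)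
      + 1 / pi\<^sup>2 * (\<integral>w. indicator (square R - square 1) w / (norm w)\<^sup>2 \<partial>lborel)
      - (\<integral>w. indicator (square R - square 1) w * weight_gap w \<partial>lborel)"
    unfolding split using integrable_square_weight
    by (simp only: Bochner_Integration.integral_diff Bochner_Integration.integral_add
        integral_mult_right_zero Bochner_Integration.integrable_add
        Bochner_Integration.integrable_mult_right)
  then show ?thesis
    unfolding integral_inverse_sq_shell[OF assms] by (simp add: power2_eq_square)
qed

lemma square_weight_asymp:
  "((\<lambda>R. (\<integral>w. indicator (square R) w * weight w \<partial>lborel) - 2 / pi * ln R) \<longlongrightarrow> weight_log_const) at_top"
proof -
  have "((\<lambda>R. \<integral>w. indicator (square R - square 1) w * weight_gap w \<partial>lborel)
      \<longlongrightarrow> (\<integral>w. indicator (- square 1) w * weight_gap w \<partial>lborel)) at_top"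
  proof (rule integral_dominated_convergence_at_top[OF _ _ integrable_majorant])
    show "AE w in lborel. ((\<lambda>R. indicator (square R - square 1) w * weight_gap w)
        \<longlongrightarrow> indicator (- square 1) w * weight_gap w) at_top"
    proof (intro AE_I2 tendsto_eventually)
      fix w :: "real \<times> real"
      show "\<forall>\<^sub>F R in at_top. indicator (square R - square 1) w * weight_gap w
          = indicator (- square 1) w * weight_gap w"
        using eventually_ge_at_top[of "max \<bar>fst w\<bar> \<bar>snd w\<bar>"]
        by eventually_elim (auto simp: indicator_def square_def)
    qed
    show "\<forall>\<^sub>F R in at_top. AE w in lborel. norm (indicator (square R - square 1) w * weight_gap w) \<le> majorant w"
      using weight_gap_bounds majorant_pos
      by (intro always_eventually allI AE_I2) (auto simp: indicator_def less_imp_le)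
  qed measurable
  then have "((\<lambda>R. (\<integral>w. indicator (square 1) w * weight w \<partial>lborel)
      - (\<integral>w. indicator (square R - square 1) w * weight_gap w \<partial>lborel)) \<longlongrightarrow> weight_log_const) at_top"
    unfolding weight_log_const_def by (intro tendsto_diff tendsto_const)
  moreover have "\<forall>\<^sub>F R in at_top. (\<integral>w. indicator (square 1) w * weight w \<partial>lborel)
      - (\<integral>w. indicator (square R - square 1) w * weight_gap w \<partial>lborel)
      = (\<integral>w. indicator (square R) w * weight w \<partial>lborel) - 2 / pi * ln R"
    using eventually_ge_at_top[of 1]
  proof eventually_elim
    case (elim R)
    show ?case using integral_square_weight_eq[OF elim] by linarith
  qed
  ultimately show ?thesis
    by (rule Lim_transform_eventually)
qed

lemma square_weight_asymp_shift:
  "((\<lambda>R. (\<integral>w. indicator (square (R + c)) w * weight w \<partial>lborel) - 2 / pi * ln R) \<longlongrightarrow> weight_log_const) at_top"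
proof -
  have "filterlim (\<lambda>R. R + c) at_top at_top" by real_asymp
  from filterlim_compose[OF square_weight_asymp this]
  have "((\<lambda>R. (\<integral>w. indicator (square (R + c)) w * weight w \<partial>lborel) - 2 / pi * ln (R + c))
      \<longlongrightarrow> weight_log_const) at_top" .
  moreover have "((\<lambda>R. 2 / pi * (ln (R + c) - ln R)) \<longlongrightarrow> 0) at_top"
    by real_asymp
  ultimately have "((\<lambda>R. (\<integral>w. indicator (square (R + c)) w * weight w \<partial>lborel) - 2 / pi * ln (R + c)
      + 2 / pi * (ln (R + c) - ln R)) \<longlongrightarrow> weight_log_const + 0) at_top"
    by (rule tendsto_add)
  then show ?thesis by (simp add: algebra_simps)
qed

subsection \<open>Rounding to the grid\<close>

lemma integrable_grid_square:
  fixes f :: "real \<times> real \<Rightarrow> real"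
  assumes "M \<ge> 1" "f \<in> borel_measurable lborel" "\<And>w. \<bar>f w\<bar> \<le> c"
  shows "integrable lborel (\<lambda>w. indicator (square R) (grid M w) * f w)"
proof (rule integrable_bounded_on_square[where c = c and R = "R + 1"])
  show "\<bar>indicator (square R) (grid M w) * f w\<bar> \<le> c * indicator (square (R + 1)) w" for w
    using grid_mem_square(2)[OF assms(1), of w R] assms(3)[of w] by (auto simp: indicator_def)
qed (use assms(2) in measurable)

lemma rounded_square_weight_asymp:
  assumes "M \<ge> 1"
  shows "((\<lambda>R. (\<integral>w. indicator (square R) (grid M w) * weight w \<partial>lborel) - 2 / pi * ln R)
    \<longlongrightarrow> weight_log_const) at_top"
proof (rule tendsto_sandwich[OF _ _ square_weight_asymp_shift[of "-1"] square_weight_asymp_shift[of 1]])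
  have int: "integrable lborel (\<lambda>w. indicator (square R) (grid M w) * weight w)" for R
    using assms abs_weight_le_1 by (intro integrable_grid_square[where c = 1]) auto
  have "(\<integral>w. indicator (square (R + - 1)) w * weight w \<partial>lborel)
      \<le> (\<integral>w. indicator (square R) (grid M w) * weight w \<partial>lborel)" for R
  proof (rule integral_mono[OF integrable_square_weight int])
    show "indicator (square (R + - 1)) w * weight w \<le> indicator (square R) (grid M w) * weight w" for w
      using grid_mem_square(1)[OF assms, of w R] weight_pos[of w] by (simp add: indicator_def)
  qed
  then show "\<forall>\<^sub>F R in at_top. (\<integral>w. indicator (square (R + - 1)) w * weight w \<partial>lborel) - 2 / pi * ln R
      \<le> (\<integral>w. indicator (square R) (grid M w) * weight w \<partial>lborel) - 2 / pi * ln R"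
    by (intro always_eventually allI diff_right_mono)
  have "(\<integral>w. indicator (square R) (grid M w) * weight w \<partial>lborel)
      \<le> (\<integral>w. indicator (square (R + 1)) w * weight w \<partial>lborel)" for R
  proof (rule integral_mono[OF int integrable_square_weight])
    show "indicator (square R) (grid M w) * weight w \<le> indicator (square (R + 1)) w * weight w" for w
      using grid_mem_square(2)[OF assms, of w R] weight_pos[of w] by (simp add: indicator_def)
  qed
  then show "\<forall>\<^sub>F R in at_top. (\<integral>w. indicator (square R) (grid M w) * weight w \<partial>lborel) - 2 / pi * ln R
      \<le> (\<integral>w. indicator (square (R + 1)) w * weight w \<partial>lborel) - 2 / pi * ln R"
    by (intro always_eventually allI diff_right_mono)
qed

definition riemann_error :: "real \<Rightarrow> real" where
  "riemann_error M = (\<integral>w. weight (grid M w) - weight w \<partial>lborel)"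

lemma riemann_error_tendsto_0: "(riemann_error \<longlongrightarrow> 0) at_top"
proof -
  have "(riemann_error \<longlongrightarrow> (\<integral>w. 0 \<partial>(lborel :: (real \<times> real) measure))) at_top"
    unfolding riemann_error_def
  proof (rule integral_dominated_convergence_at_top[OF _ _ integrable_majorant])
    show "AE w in lborel. ((\<lambda>M. weight (grid M w) - weight w) \<longlongrightarrow> 0) at_top"
      using isCont_tendsto_compose[OF isCont_weight grid_tendsto]
      by (intro AE_I2) (simp add: LIM_zero)
    show "\<forall>\<^sub>F M in at_top. AE w in lborel. norm (weight (grid M w) - weight w) \<le> majorant w"
      using eventually_ge_at_top[of 1]
    proof eventually_elim
      case (elim M)
      show ?case using weight_diff_le_majorant[OF grid_close[OF elim]] by simp
    qed
  qed measurable
  then show ?thesis by simp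
qed

lemma rounded_weight_asymp:
  assumes "M \<ge> 1"
  shows "((\<lambda>R. (\<integral>w. indicator (square R) (grid M w) * weight (grid M w) \<partial>lborel) - 2 / pi * ln R)
    \<longlongrightarrow> weight_log_const + riemann_error M) at_top"
proof -
  let ?d = "\<lambda>w. weight (grid M w) - weight w"
  have err: "((\<lambda>R. \<integral>w. indicator (square R) (grid M w) * ?d w \<partial>lborel) \<longlongrightarrow> riemann_error M) at_top"
    unfolding riemann_error_def
  proof (rule integral_dominated_convergence_at_top[OF _ _ integrable_majorant])
    show "AE w in lborel. ((\<lambda>R. indicator (square R) (grid M w) * ?d w) \<longlongrightarrow> ?d w) at_top"
    proof (intro AE_I2 tendsto_eventually)
      fix w :: "real \<times> real"
      show "\<forall>\<^sub>F R in at_top. indicator (square R) (grid M w) * ?d w = ?d w"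
        using eventually_ge_at_top[of "max \<bar>fst (grid M w)\<bar> \<bar>snd (grid M w)\<bar>"]
        by eventually_elim (auto simp: indicator_def square_def)
    qed
    show "\<forall>\<^sub>F R in at_top. AE w in lborel. norm (indicator (square R) (grid M w) * ?d w) \<le> majorant w"
      using weight_diff_le_majorant[OF grid_close[OF assms]] majorant_pos
      by (intro always_eventually allI AE_I2) (auto simp: indicator_def less_imp_le)
  qed measurable
  have split: "(\<integral>w. indicator (square R) (grid M w) * weight (grid M w) \<partial>lborel)
      = (\<integral>w. indicator (square R) (grid M w) * weight w \<partial>lborel)
        + (\<integral>w. indicator (square R) (grid M w) * ?d w \<partial>lborel)" for R
  proof -
    have "integrable lborel (\<lambda>w. indicator (square R) (grid M w) * weight w)"
      using assms abs_weight_le_1 by (intro integrable_grid_square[where c = 1]) auto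
    moreover have "integrable lborel (\<lambda>w. indicator (square R) (grid M w) * ?d w)"
      using assms abs_weight_diff_le_1 by (intro integrable_grid_square[where c = 1]) auto
    ultimately show ?thesis
      by (subst Bochner_Integration.integral_add[symmetric]) (auto simp: algebra_simps)
  qed
  from tendsto_add[OF rounded_square_weight_asymp[OF assms] err] show ?thesis
    by (simp only: split diff_add_eq)
qed

subsection \<open>Lattice sums as integrals of step functions\<close>

definition cell :: "real \<Rightarrow> int \<times> int \<Rightarrow> (real \<times> real) set" where
  "cell M k = {of_int (fst k) / M ..< (of_int (fst k) + 1) / M} \<times> {of_int (snd k) / M ..< (of_int (snd k) + 1) / M}"

lemma mem_cell_iff:
  assumes "M > 0"
  shows "w \<in> cell M k \<longleftrightarrow> (\<lfloor>M * fst w\<rfloor>, \<lfloor>M * snd w\<rfloor>) = k"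
proof -
  have "\<lfloor>M * x\<rfloor> = n \<longleftrightarrow> of_int n / M \<le> x \<and> x < (of_int n + 1) / M" for x n
    using assms by (simp add: floor_eq_iff field_simps)
  then show ?thesis unfolding cell_def by (cases w; cases k) auto
qed

lemma cell_sets [measurable]: "cell M k \<in> sets lborel"
  unfolding cell_def by (simp add: borel_prod[symmetric])

lemma measure_cell:
  assumes "M > 0"
  shows "measure lborel (cell M k) = 1 / M\<^sup>2"
proof -
  have "emeasure (lborel :: (real \<times> real) measure) (cell M k) = emeasure (lborel \<Otimes>\<^sub>M lborel) (cell M k)"
    by (simp only: lborel_prod)
  also have "\<dots> = ennreal (1 / M) * ennreal (1 / M)"
    unfolding cell_def using assms by (subst lborel.emeasure_pair_measure_Times) (auto simp: field_simps)
  finally show ?thesis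
    using assms by (simp add: measure_def ennreal_mult[symmetric] power2_eq_square)
qed

lemma integrable_cell_indicator: "M > 0 \<Longrightarrow> integrable lborel (indicator (cell M k) :: real \<times> real \<Rightarrow> real)"
  using measure_cell[of M k] cell_sets[of M k]
  by (intro integrable_real_indicator) (auto simp: measure_def split: if_splits)

lemma infsum_eq_sum_support:
  "finite S \<Longrightarrow> (\<And>k. k \<notin> S \<Longrightarrow> f k = 0) \<Longrightarrow> infsum f UNIV = sum f S"
proof -
  assume "finite S" "\<And>k. k \<notin> S \<Longrightarrow> f k = 0"
  then have "infsum f UNIV = infsum f S" by (intro infsum_cong_neutral) auto
  then show ?thesis using \<open>finite S\<close> by simp
qed

lemma integral_lattice_step_function:
  fixes F :: "int \<times> int \<Rightarrow> real"
  assumes "M > 0" "finite S" "\<And>k. k \<notin> S \<Longrightarrow> F k = 0"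
  shows "(\<integral>w. F (\<lfloor>M * fst w\<rfloor>, \<lfloor>M * snd w\<rfloor>) \<partial>lborel) = (\<Sum>\<^sub>\<infinity>k. F k) / M\<^sup>2"
proof -
  have step: "F (\<lfloor>M * fst w\<rfloor>, \<lfloor>M * snd w\<rfloor>) = (\<Sum>k\<in>S. F k * indicator (cell M k) w)" for w
  proof -
    have "(\<Sum>k\<in>S. F k * indicator (cell M k) w) = (\<Sum>k\<in>S \<inter> {(\<lfloor>M * fst w\<rfloor>, \<lfloor>M * snd w\<rfloor>)}. F k)"
      using assms(2) by (intro sum.mono_neutral_cong_right) (auto simp: mem_cell_iff[OF assms(1)] indicator_def)
    then show ?thesis using assms(3) by (cases "(\<lfloor>M * fst w\<rfloor>, \<lfloor>M * snd w\<rfloor>) \<in> S") auto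
  qed
  have "(\<integral>w. F (\<lfloor>M * fst w\<rfloor>, \<lfloor>M * snd w\<rfloor>) \<partial>lborel) = (\<Sum>k\<in>S. F k * measure lborel (cell M k))"
    unfolding step using integrable_cell_indicator[OF assms(1)] by simp
  also have "\<dots> = (\<Sum>k\<in>S. F k) / M\<^sup>2"
    using measure_cell[OF assms(1)] by (simp add: sum_divide_distrib)
  finally show ?thesis
    using infsum_eq_sum_support[OF assms(2,3)] by simp
qed

lemma measurable_grid_compose: "(\<lambda>w. f (grid M w)) \<in> borel_measurable lborel"
  for f :: "real \<times> real \<Rightarrow> real"
proof -
  let ?k = "\<lambda>w :: real \<times> real. (\<lfloor>M * fst w\<rfloor>, \<lfloor>M * snd w\<rfloor>)"
  have "?k -` {k} \<inter> space lborel \<in> sets lborel" for k :: "int \<times> int"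
  proof -
    have "?k -` {k} = {w. \<lfloor>M * fst w\<rfloor> = fst k \<and> \<lfloor>M * snd w\<rfloor> = snd k}"
      by (cases k) auto
    then show ?thesis by simp
  qed
  then have "?k \<in> measurable lborel (count_space UNIV)"
    by (subst measurable_count_space_eq_countable) auto
  from measurable_compose_countable'[where f = "\<lambda>k w. f (of_int (fst k) / M, of_int (snd k) / M)"
      and I = UNIV, OF measurable_const this]
  show ?thesis unfolding grid_def by simp
qed

lemma finite_lattice_points_in_square:
  assumes "c > 0"
  shows "finite {k :: int \<times> int. (c * of_int (fst k), c * of_int (snd k)) \<in> square R}"
proof (rule finite_subset)
  show "{k :: int \<times> int. (c * of_int (fst k), c * of_int (snd k)) \<in> square R}
      \<subseteq> {-\<lceil>R / c\<rceil>..\<lceil>R / c\<rceil>} \<times> {-\<lceil>R / c\<rceil>..\<lceil>R / c\<rceil>}"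
  proof safe
    fix a b :: int assume "(c * of_int (fst (a, b)), c * of_int (snd (a, b))) \<in> square R"
    then have "\<bar>of_int a\<bar> \<le> R / c" "\<bar>of_int b\<bar> \<le> R / c"
      using assms unfolding square_def by (auto simp: abs_mult field_simps)
    then show "a \<in> {-\<lceil>R / c\<rceil>..\<lceil>R / c\<rceil>}" "b \<in> {-\<lceil>R / c\<rceil>..\<lceil>R / c\<rceil>}"
      by (auto simp: abs_le_iff) linarith+
  qed
qed simp

definition lattice_sum :: "(real \<times> real \<Rightarrow> real) \<Rightarrow> real \<Rightarrow> real \<Rightarrow> real" where
  "lattice_sum v \<epsilon> L = (\<Sum>\<^sub>\<infinity>k\<in>UNIV. v (\<epsilon> / L * of_int (fst k), \<epsilon> / L * of_int (snd k))
     / (1 + pi\<^sup>2 / L\<^sup>2 * (of_int (fst k) ^ 2 + of_int (snd k) ^ 2)))"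

lemma c_epsL_eq_lattice_sum: "c_epsL \<tau> \<epsilon> L = lattice_sum (\<lambda>x. (\<tau> x)\<^sup>2) \<epsilon> L / (4 * L\<^sup>2)"
  unfolding c_epsL_def lattice_sum_def by simp

lemma lattice_sum_add:
  assumes "\<epsilon> > 0" "L > 0" "\<And>x. x \<notin> square b \<Longrightarrow> v x = 0" "\<And>x. x \<notin> square b \<Longrightarrow> v' x = 0"
  shows "lattice_sum (\<lambda>x. v x + v' x) \<epsilon> L = lattice_sum v \<epsilon> L + lattice_sum v' \<epsilon> L"
proof -
  let ?P = "{k. (\<epsilon> / L * of_int (fst k), \<epsilon> / L * of_int (snd k)) \<in> square b}"
  have "finite ?P" using assms(1,2) by (intro finite_lattice_points_in_square) simp
  then show ?thesis
    unfolding lattice_sum_def using assms(3,4)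
    by (subst (1 2 3) infsum_eq_sum_support[OF \<open>finite ?P\<close>])
      (auto simp: add_divide_distrib sum.distrib)
qed

lemma lattice_sum_eq_integral:
  assumes "\<epsilon> > 0" "L > 0" "M > 0" "\<And>x. x \<notin> square b \<Longrightarrow> v x = 0"
  shows "lattice_sum v \<epsilon> L = M\<^sup>2 *
    (\<integral>w. v ((\<epsilon> * M / L) *\<^sub>R grid M w) / (1 + (M / L)\<^sup>2 * pi\<^sup>2 * (norm (grid M w))\<^sup>2) \<partial>lborel)"
proof -
  define F where "F k = v (\<epsilon> / L * of_int (fst k), \<epsilon> / L * of_int (snd k))
    / (1 + pi\<^sup>2 / L\<^sup>2 * (of_int (fst k) ^ 2 + of_int (snd k) ^ 2))" for k :: "int \<times> int"
  have "(\<epsilon> * M / L) *\<^sub>R grid M w = (\<epsilon> / L * of_int \<lfloor>M * fst w\<rfloor>, \<epsilon> / L * of_int \<lfloor>M * snd w\<rfloor>)"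
    "(M / L)\<^sup>2 * pi\<^sup>2 * (norm (grid M w))\<^sup>2 = pi\<^sup>2 / L\<^sup>2 * (of_int \<lfloor>M * fst w\<rfloor> ^ 2 + of_int \<lfloor>M * snd w\<rfloor> ^ 2)"
    for w using assms(2,3) unfolding grid_def norm_sq_prod by (simp_all add: field_simps)
  then have step: "F (\<lfloor>M * fst w\<rfloor>, \<lfloor>M * snd w\<rfloor>)
      = v ((\<epsilon> * M / L) *\<^sub>R grid M w) / (1 + (M / L)\<^sup>2 * pi\<^sup>2 * (norm (grid M w))\<^sup>2)" for w
    unfolding F_def by simp
  have "finite {k. (\<epsilon> / L * of_int (fst k), \<epsilon> / L * of_int (snd k)) \<in> square b}"
    using assms(1,2) by (intro finite_lattice_points_in_square) simp
  then have "(\<integral>w. F (\<lfloor>M * fst w\<rfloor>, \<lfloor>M * snd w\<rfloor>) \<partial>lborel) = (\<Sum>\<^sub>\<infinity>k. F k) / M\<^sup>2"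
    by (rule integral_lattice_step_function[OF assms(3)]) (simp add: F_def assms(4))
  moreover have "lattice_sum v \<epsilon> L = (\<Sum>\<^sub>\<infinity>k. F k)"
    unfolding lattice_sum_def F_def ..
  ultimately show ?thesis
    unfolding step using assms(3) by simp
qed

definition outer_profile :: "(real \<times> real \<Rightarrow> real) \<Rightarrow> real \<Rightarrow> real \<times> real \<Rightarrow> real" where
  "outer_profile \<tau> s x = (if x \<in> square s then 0 else (\<tau> x)\<^sup>2)"

lemma scaleR_mem_square_iff: "t > 0 \<Longrightarrow> (1 / t) *\<^sub>R p \<in> square s \<longleftrightarrow> p \<in> square (s * t)"
  unfolding square_def by (cases p) (simp add: abs_mult field_simps)

(* The sum over the indicator is read on the grid of mesh 1/L, the remainder on the grid of mesh
   1/(tL), where it becomes a Riemann sum for a fixed function. *)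
lemma c_epsL_split:
  assumes "t > 0" "L > 0" "\<And>x. x \<in> square s \<Longrightarrow> \<tau> x = 1" "\<And>x. x \<notin> square b \<Longrightarrow> \<tau> x = 0"
  shows "c_epsL \<tau> (1 / t) L = (\<integral>w. indicator (square (s * t)) (grid L w) * weight (grid L w) \<partial>lborel) / 4
    + (\<integral>x. outer_profile \<tau> s (grid (t * L) x) / (1 / t\<^sup>2 + pi\<^sup>2 * (norm (grid (t * L) x))\<^sup>2) \<partial>lborel) / 4"
proof -
  let ?B = "max s b"
  have vanish: "indicator (square s) x = (0 :: real)" "outer_profile \<tau> s x = 0" if "x \<notin> square ?B" for x
  proof -
    have "x \<notin> square s" "x \<notin> square b" using that unfolding square_def by auto
    then show "indicator (square s) x = (0 :: real)" "outer_profile \<tau> s x = 0"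
      using assms(4) by (simp_all add: outer_profile_def)
  qed
  have "(\<tau> x)\<^sup>2 = indicator (square s) x + outer_profile \<tau> s x" for x
    using assms(3) by (simp add: outer_profile_def)
  then have "lattice_sum (\<lambda>x. (\<tau> x)\<^sup>2) (1 / t) L
      = lattice_sum (indicator (square s)) (1 / t) L + lattice_sum (outer_profile \<tau> s) (1 / t) L"
    using lattice_sum_add[of "1 / t" L ?B "indicator (square s)" "outer_profile \<tau> s"] assms(1,2) vanish
    by simp
  also have "lattice_sum (indicator (square s)) (1 / t) L
      = L\<^sup>2 * (\<integral>w. indicator (square (s * t)) (grid L w) * weight (grid L w) \<partial>lborel)"
    using lattice_sum_eq_integral[of "1 / t" L L ?B "indicator (square s)"] assms(1,2) vanish
    by (simp add: scaleR_mem_square_iff indicator_def weight_def)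
  also have "lattice_sum (outer_profile \<tau> s) (1 / t) L = (t * L)\<^sup>2 *
      (\<integral>x. outer_profile \<tau> s (grid (t * L) x) / (1 + t\<^sup>2 * pi\<^sup>2 * (norm (grid (t * L) x))\<^sup>2) \<partial>lborel)"
    using lattice_sum_eq_integral[of "1 / t" L "t * L" ?B "outer_profile \<tau> s"] assms(1,2) vanish
    by simp
  also have "\<dots> = L\<^sup>2 *
      (\<integral>x. outer_profile \<tau> s (grid (t * L) x) / (1 / t\<^sup>2 + pi\<^sup>2 * (norm (grid (t * L) x))\<^sup>2) \<partial>lborel)"
  proof -
    have "t\<^sup>2 * (a / (1 + t\<^sup>2 * c)) = a / (1 / t\<^sup>2 + c)" if "c \<ge> 0" for a c :: real
      using assms(1) that add_pos_nonneg[of 1 "t\<^sup>2 * c"] by (simp add: field_simps)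
    then show ?thesis
      by (simp add: power_mult_distrib mult.assoc flip: integral_mult_right_zero)
  qed
  finally show ?thesis
    unfolding c_epsL_eq_lattice_sum using assms(2) by (simp add: field_simps)
qed

subsection \<open>The part of the lattice sum away from the origin\<close>

lemma outer_integrand_bound:
  fixes u :: "real \<times> real \<Rightarrow> real"
  assumes "M \<ge> 1" "c \<ge> 0" "s > 0" "\<And>x. \<bar>u x\<bar> \<le> 1"
    and "\<And>x. x \<in> square s \<Longrightarrow> u x = 0" "\<And>x. x \<notin> square b \<Longrightarrow> u x = 0"
  shows "\<bar>u (grid M x) / (c + pi\<^sup>2 * (norm (grid M x))\<^sup>2)\<bar> \<le> 1 / (pi\<^sup>2 * s\<^sup>2) * indicator (square (b + 1)) x"
proof (cases "u (grid M x) = 0")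
  case False
  then have "grid M x \<notin> square s" "grid M x \<in> square b" using assms(5,6) by blast+
  then have "x \<in> square (b + 1)" and "s < norm (grid M x)"
    using grid_mem_square(2)[OF assms(1)] max_abs_le_norm[of "grid M x"] unfolding square_def by auto
  then have le: "pi\<^sup>2 * s\<^sup>2 \<le> c + pi\<^sup>2 * (norm (grid M x))\<^sup>2"
    using assms(2,3) by (intro add_increasing mult_left_mono power_mono) auto
  have "0 < pi\<^sup>2 * s\<^sup>2" using assms(3) by simp
  then have "\<bar>u (grid M x)\<bar> / (c + pi\<^sup>2 * (norm (grid M x))\<^sup>2) \<le> 1 / (pi\<^sup>2 * s\<^sup>2)"
    using le assms(4)[of "grid M x"] by (intro frac_le) auto
  then show ?thesis
    using le \<open>0 < pi\<^sup>2 * s\<^sup>2\<close> \<open>x \<in> square (b + 1)\<close> by simp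
qed simp

lemma outer_integrand_tendsto:
  fixes u :: "real \<times> real \<Rightarrow> real"
  assumes "L > 0" "u 0 = 0" "isCont u x"
  shows "((\<lambda>t. u (grid (t * L) x) / (1 / t\<^sup>2 + pi\<^sup>2 * (norm (grid (t * L) x))\<^sup>2))
    \<longlongrightarrow> u x / (pi\<^sup>2 * (norm x)\<^sup>2)) at_top"
proof (cases "x = 0")
  case True
  then show ?thesis using assms(2) by (simp add: grid_def zero_prod_def)
next
  case False
  have "filterlim (\<lambda>t. t * L) at_top at_top" using assms(1) by real_asymp
  from filterlim_compose[OF grid_tendsto this]
  have grid: "((\<lambda>t. grid (t * L) x) \<longlongrightarrow> x) at_top" .
  have "((\<lambda>t. 1 / t\<^sup>2 + pi\<^sup>2 * (norm (grid (t * L) x))\<^sup>2) \<longlongrightarrow> 0 + pi\<^sup>2 * (norm x)\<^sup>2) at_top"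
    by (intro tendsto_add tendsto_mult tendsto_const tendsto_power tendsto_norm grid) real_asymp
  with isCont_tendsto_compose[OF assms(3) grid] show ?thesis
    using False by (intro tendsto_divide) auto
qed

lemma outer_integral_tendsto:
  fixes u :: "real \<times> real \<Rightarrow> real"
  assumes "L > 0" "s > 0" "\<And>x. \<bar>u x\<bar> \<le> 1"
    and "\<And>x. x \<in> square s \<Longrightarrow> u x = 0" "\<And>x. x \<notin> square b \<Longrightarrow> u x = 0"
    and "N \<in> null_sets lborel" "\<And>x. x \<notin> N \<Longrightarrow> isCont u x"
  shows "((\<lambda>t. \<integral>x. u (grid (t * L) x) / (1 / t\<^sup>2 + pi\<^sup>2 * (norm (grid (t * L) x))\<^sup>2) \<partial>lborel)
    \<longlongrightarrow> (\<integral>x. (if x \<in> N then 0 else u x / (pi\<^sup>2 * (norm x)\<^sup>2)) \<partial>lborel)) at_top"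
proof (rule integral_dominated_convergence_at_top)
  let ?U = "\<lambda>t x. u (grid (t * L) x) / (1 / t\<^sup>2 + pi\<^sup>2 * (norm (grid (t * L) x))\<^sup>2)"
  have "u 0 = 0" using assms(2,4) by (simp add: square_def)
  then have lim: "((\<lambda>t. ?U t x) \<longlongrightarrow> (if x \<in> N then 0 else u x / (pi\<^sup>2 * (norm x)\<^sup>2))) at_top"
    if "x \<notin> N" for x
    using outer_integrand_tendsto[OF assms(1) _ assms(7)[OF that]] that by simp
  show "AE x in lborel. ((\<lambda>t. ?U t x) \<longlongrightarrow> (if x \<in> N then 0 else u x / (pi\<^sup>2 * (norm x)\<^sup>2))) at_top"
    using lim by (intro AE_I'[OF assms(6)]) auto
  show meas: "?U t \<in> borel_measurable lborel" for t
    using measurable_grid_compose[of "\<lambda>p. u p / (1 / t\<^sup>2 + pi\<^sup>2 * (norm p)\<^sup>2)"] by simp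
  show "(\<lambda>x. if x \<in> N then 0 else u x / (pi\<^sup>2 * (norm x)\<^sup>2)) \<in> borel_measurable lborel"
  proof (rule borel_measurable_LIMSEQ_real[where u = "\<lambda>n x. if x \<in> N then 0 else ?U (real n) x"])
    show "(\<lambda>n. if x \<in> N then 0 else ?U (real n) x) \<longlonglongrightarrow> (if x \<in> N then 0 else u x / (pi\<^sup>2 * (norm x)\<^sup>2))" for x
      using filterlim_compose[OF lim filterlim_real_sequentially] by (cases "x \<in> N") auto
    have "N \<in> sets lborel" using assms(6) by auto
    then show "(\<lambda>x. if x \<in> N then 0 else ?U (real n) x) \<in> borel_measurable lborel" for n
      using meas by measurable
  qed
  show "integrable lborel (\<lambda>x. 1 / (pi\<^sup>2 * s\<^sup>2) * indicator (square (b + 1)) x)"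
    using integrable_square_indicator by simp
  show "\<forall>\<^sub>F t in at_top. AE x in lborel. norm (?U t x) \<le> 1 / (pi\<^sup>2 * s\<^sup>2) * indicator (square (b + 1)) x"
    using eventually_ge_at_top[of "1 / L"]
  proof eventually_elim
    case (elim t)
    then have "t * L \<ge> 1" using assms(1) by (simp add: field_simps)
    have "\<bar>?U t x\<bar> \<le> 1 / (pi\<^sup>2 * s\<^sup>2) * indicator (square (b + 1)) x" for x
      by (rule outer_integrand_bound[OF \<open>t * L \<ge> 1\<close> _ assms(2-5)]) simp
    then show ?case by (intro AE_I2) simp
  qed
qed

definition edge_lines :: "real \<Rightarrow> (real \<times> real) set" where
  "edge_lines s = {x. \<bar>fst x\<bar> = s \<or> \<bar>snd x\<bar> = s}"

lemma null_sets_edge_lines: "edge_lines s \<in> null_sets lborel"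
  unfolding edge_lines_def
proof (rule null_sets_subset)
  have "{s, -s} \<times> UNIV \<union> UNIV \<times> {s, -s} \<in> null_sets (lborel \<Otimes>\<^sub>M lborel)"
    using finite_imp_null_set_lborel[of "{s, -s}"]
    by (intro null_sets.Un lborel.times_in_null_sets1 lborel.times_in_null_sets2) auto
  then show "{s, -s} \<times> UNIV \<union> UNIV \<times> {s, -s} \<in> null_sets (lborel :: (real \<times> real) measure)"
    by (simp only: lborel_prod)
qed (auto simp: abs_if split: if_splits)

lemma isCont_outer_profile:
  assumes "isCont \<tau> x" "x \<notin> edge_lines s"
  shows "isCont (outer_profile \<tau> s) x"
proof (cases "x \<in> square s")
  case True
  have "open {y :: real \<times> real. \<bar>fst y\<bar> < s \<and> \<bar>snd y\<bar> < s}"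
    by (intro open_Collect_conj open_Collect_less continuous_intros)
  moreover have "x \<in> {y. \<bar>fst y\<bar> < s \<and> \<bar>snd y\<bar> < s}"
    using True assms(2) unfolding square_def edge_lines_def by auto
  ultimately have "\<forall>\<^sub>F y in nhds x. outer_profile \<tau> s y = 0"
    by (rule eventually_nhds_in_open[THEN eventually_mono]) (auto simp: outer_profile_def square_def)
  then show ?thesis by (simp add: isCont_cong)
next
  case False
  have "open {y :: real \<times> real. s < \<bar>fst y\<bar> \<or> s < \<bar>snd y\<bar>}"
    by (intro open_Collect_disj open_Collect_less continuous_intros)
  moreover have "x \<in> {y. s < \<bar>fst y\<bar> \<or> s < \<bar>snd y\<bar>}" using False unfolding square_def by auto
  ultimately have "\<forall>\<^sub>F y in nhds x. outer_profile \<tau> s y = (\<tau> y)\<^sup>2"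
    by (rule eventually_nhds_in_open[THEN eventually_mono]) (auto simp: outer_profile_def square_def)
  then show ?thesis using assms(1) by (simp add: isCont_cong)
qed

(* tau is only continuous almost everywhere, hence need not be Borel measurable; cutting out a null
   set N off which outer_profile is continuous makes the integrand a pointwise limit of measurable
   functions, without changing the value. *)
definition outer_const :: "(real \<times> real \<Rightarrow> real) \<Rightarrow> real \<Rightarrow> (real \<times> real) set \<Rightarrow> real" where
  "outer_const \<tau> s N = (\<integral>x. (if x \<in> N then 0 else outer_profile \<tau> s x / (pi\<^sup>2 * (norm x)\<^sup>2)) \<partial>lborel)"

lemma c_epsL_asymptotics_at_top:
  assumes "L \<ge> 1" "s > 0" "\<And>x. \<bar>\<tau> x\<bar> \<le> 1"
    and "\<And>x. x \<in> square s \<Longrightarrow> \<tau> x = 1" "\<And>x. x \<notin> square b \<Longrightarrow> \<tau> x = 0"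
    and "N \<in> null_sets lborel" "\<And>x. x \<notin> N \<Longrightarrow> isCont (outer_profile \<tau> s) x"
  shows "((\<lambda>t. c_epsL \<tau> (1 / t) L - ln t / (2 * pi))
    \<longlongrightarrow> (weight_log_const + riemann_error L + outer_const \<tau> s N) / 4 + ln s / (2 * pi)) at_top"
proof -
  let ?I = "\<lambda>t. \<integral>w. indicator (square (s * t)) (grid L w) * weight (grid L w) \<partial>lborel"
  let ?J = "\<lambda>t. \<integral>x. outer_profile \<tau> s (grid (t * L) x) / (1 / t\<^sup>2 + pi\<^sup>2 * (norm (grid (t * L) x))\<^sup>2) \<partial>lborel"
  have "filterlim (\<lambda>t. s * t) at_top at_top" using assms(2) by real_asymp
  from filterlim_compose[OF rounded_weight_asymp[OF assms(1)] this]
  have I: "((\<lambda>t. ?I t - 2 / pi * ln (s * t)) \<longlongrightarrow> weight_log_const + riemann_error L) at_top" .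
  have "\<bar>outer_profile \<tau> s x\<bar> \<le> 1" for x
    using assms(3)[of x] by (simp add: outer_profile_def abs_square_le_1)
  moreover have "outer_profile \<tau> s x = 0" if "x \<in> square s \<or> x \<notin> square b" for x
    using that assms(5)[of x] by (auto simp: outer_profile_def)
  ultimately have J: "(?J \<longlongrightarrow> outer_const \<tau> s N) at_top"
    unfolding outer_const_def using assms(1,2,6,7) by (intro outer_integral_tendsto[where b = b]) auto
  have eq: "\<forall>\<^sub>F t in at_top. (?I t - 2 / pi * ln (s * t)) / 4 + ?J t / 4 + ln s / (2 * pi)
      = c_epsL \<tau> (1 / t) L - ln t / (2 * pi)"
    using eventually_gt_at_top[of 0]
  proof eventually_elim
    case (elim t)
    have "c_epsL \<tau> (1 / t) L = ?I t / 4 + ?J t / 4"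
      using elim assms(1,4,5) by (intro c_epsL_split) auto
    then have "c_epsL \<tau> (1 / t) L - ln t / (2 * pi) = ?I t / 4 + ?J t / 4 - ln t / (2 * pi)"
      by (simp only:)
    also have "\<dots> = (?I t - 2 / pi * ln (s * t)) / 4 + ?J t / 4 + ln s / (2 * pi)"
      unfolding ln_mult_pos[OF assms(2) elim] by (simp add: field_simps)
    finally show ?case ..
  qed
  have "((\<lambda>t. (?I t - 2 / pi * ln (s * t)) / 4 + ?J t / 4 + ln s / (2 * pi))
      \<longlongrightarrow> (weight_log_const + riemann_error L) / 4 + outer_const \<tau> s N / 4 + ln s / (2 * pi)) at_top"
    by (intro tendsto_intros I J) simp_all
  from Lim_transform_eventually[OF this eq] show ?thesis
    by (simp add: add_divide_distrib)
qed

lemma c_epsL_asymptotics: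
  assumes "L \<ge> 1" "s > 0" "\<And>x. \<bar>\<tau> x\<bar> \<le> 1"
    and "\<And>x. x \<in> square s \<Longrightarrow> \<tau> x = 1" "\<And>x. x \<notin> square b \<Longrightarrow> \<tau> x = 0"
    and "N \<in> null_sets lborel" "\<And>x. x \<notin> N \<Longrightarrow> isCont \<tau> x"
  shows "((\<lambda>\<epsilon>. c_epsL \<tau> \<epsilon> L - 1 / (2 * pi) * ln (1 / \<epsilon>)
      - ((weight_log_const + outer_const \<tau> s (N \<union> edge_lines s)) / 4 + ln s / (2 * pi)))
    \<longlongrightarrow> riemann_error L / 4) (at_right 0)"
proof -
  let ?c = "(weight_log_const + outer_const \<tau> s (N \<union> edge_lines s)) / 4 + ln s / (2 * pi)"
  have null: "N \<union> edge_lines s \<in> null_sets lborel"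
    using assms(6) null_sets_edge_lines by (rule null_sets.Un)
  have cont: "isCont (outer_profile \<tau> s) x" if "x \<notin> N \<union> edge_lines s" for x
    using that assms(7) by (intro isCont_outer_profile) auto
  from tendsto_diff[OF c_epsL_asymptotics_at_top[where L = L and s = s and \<tau> = \<tau> and b = b
      and N = "N \<union> edge_lines s", OF assms(1-5) null cont] tendsto_const[of ?c]]
  have "((\<lambda>t. c_epsL \<tau> (1 / t) L - ln t / (2 * pi) - ?c) \<longlongrightarrow> riemann_error L / 4) at_top"
    by (simp add: field_simps)
  from filterlim_compose[OF this filterlim_inverse_at_top_right] show ?thesis
    by (simp add: inverse_eq_divide)
qed

theorem lemma6p16:
  shows "\<exists>C :: real \<Rightarrow> real. (C \<longlongrightarrow> 0) at_top \<and>
    (\<forall>\<tau> :: real \<times> real \<Rightarrow> real.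
       ((\<forall>x. 0 \<le> \<tau> x \<and> \<tau> x \<le> 1) \<and>
        (AE x in lborel. isCont \<tau> x) \<and>
        (\<exists>a b. 0 < a \<and> a < b \<and>
           (\<forall>x \<in> ball 0 a. \<tau> x = 1) \<and> (\<forall>x. x \<notin> ball 0 b \<longrightarrow> \<tau> x = 0)))
       \<longrightarrow> (\<exists>c\<tau> :: real. \<forall>L \<ge> 1.
              ((\<lambda>\<epsilon>. c_epsL \<tau> \<epsilon> L - 1 / (2 * pi) * ln (1 / \<epsilon>) - c\<tau>) \<longlongrightarrow> C L)
                (at_right 0)))"
proof (intro exI[of _ "\<lambda>L. riemann_error L / 4"] conjI allI impI)
  show "((\<lambda>L. riemann_error L / 4) \<longlongrightarrow> 0) at_top"
    by (rule tendsto_divide_zero[OF riemann_error_tendsto_0])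
  fix \<tau> :: "real \<times> real \<Rightarrow> real"
  assume hyps: "(\<forall>x. 0 \<le> \<tau> x \<and> \<tau> x \<le> 1) \<and> (AE x in lborel. isCont \<tau> x) \<and>
    (\<exists>a b. 0 < a \<and> a < b \<and> (\<forall>x \<in> ball 0 a. \<tau> x = 1) \<and> (\<forall>x. x \<notin> ball 0 b \<longrightarrow> \<tau> x = 0))"
  then obtain a b where "0 < a" and one: "\<forall>x \<in> ball 0 a. \<tau> x = 1" and zero: "\<forall>x. x \<notin> ball 0 b \<longrightarrow> \<tau> x = 0"
    by blast
  from hyps have "AE x in lborel. isCont \<tau> x" by simp
  then obtain N where "{x \<in> space lborel. \<not> isCont \<tau> x} \<subseteq> N" "emeasure lborel N = 0" "N \<in> sets lborel"
    by (rule AE_E)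
  then have N: "N \<in> null_sets lborel" "\<And>x. x \<notin> N \<Longrightarrow> isCont \<tau> x" by auto
  define s where "s = a / 3"
  have "0 < s" "square s \<subseteq> ball 0 a"
    using square_subset_cball[of s] \<open>0 < a\<close> by (auto simp: s_def)
  then have inner: "\<tau> x = 1" if "x \<in> square s" for x
    using one that by blast
  have outer: "\<tau> x = 0" if "x \<notin> square b" for x
    using zero that ball_subset_square[of b] by blast
  have bound: "\<bar>\<tau> x\<bar> \<le> 1" for x
  proof -
    have "0 \<le> \<tau> x" "\<tau> x \<le> 1" using hyps by blast+
    then show ?thesis by simp
  qed
  show "\<exists>c\<tau>. \<forall>L \<ge> 1. ((\<lambda>\<epsilon>. c_epsL \<tau> \<epsilon> L - 1 / (2 * pi) * ln (1 / \<epsilon>) - c\<tau>)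
      \<longlongrightarrow> riemann_error L / 4) (at_right 0)"
    using c_epsL_asymptotics[where \<tau> = \<tau> and s = s and b = b and N = N, OF _ \<open>0 < s\<close> bound inner outer N]
    by blast
qed

end
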